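(* Let $n,p\in\mathbb{N}$, $0\le\lambda\le1$. Let $f$ be analytic in $\mathrm{U}=\{|z|<1\}$ of the form $f(z)=z^p+\sum_{k=p+n}^\infty a_kz^k$, put $\mathcal{F}_\lambda(z)=(1-\lambda)f(z)+\lambda zf'(z)$, and assume $\mathcal{F}_\lambda(z)\mathcal{F}_\lambda'(z)\neq0$ for all $z\in\mathrm{U}\setminus\{0\}$. Let $\delta\in[0,1/p)$ and $$\varsigma_1=\begin{cases} -\dfrac{n\delta p}{2(1-\delta p)}, & \delta\in[0,\tfrac{1}{2p}],\\[2mm] -\dfrac{n(1-\delta p)}{2\delta p}, & \delta\in[\tfrac{1}{2p},\tfrac1p).\end{cases}$$ If $$\operatorname{Re}\left[\frac{z\mathcal{F}_\lambda'(z)}{\mathcal{F}_\lambda(z)}-1-\frac{z\mathcal{F}_\lambda''(z)}{\mathcal{F}_\lambda'(z)}\right]>\varsigma_1,\quad z\in\mathrm{U},$$ then $\operatorname{Re}\dfrac{\mathcal{F}_\lambda(z)}{z\mathcal{F}_\lambda'(z)}>\delta$ for all $z\in\mathrm{U}$. *)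

theory Defs
  imports "HOL-Complex_Analysis.Complex_Analysis"
begin

definition unit_disc :: "complex set" where
  "unit_disc = ball 0 1"

definition of_form :: "nat \<Rightarrow> nat \<Rightarrow> (complex \<Rightarrow> complex) \<Rightarrow> bool" where
  "of_form p n f \<longleftrightarrow> f holomorphic_on unit_disc \<and>
     (\<exists>a :: nat \<Rightarrow> complex. a p = 1 \<and> (\<forall>k. k < p + n \<and> k \<noteq> p \<longrightarrow> a k = 0) \<and>
        (\<forall>z\<in>unit_disc. (\<lambda>k. a k * z ^ k) sums f z))"

definition F_lam :: "real \<Rightarrow> (complex \<Rightarrow> complex) \<Rightarrow> complex \<Rightarrow> complex" where
  "F_lam lam f z = (1 - of_real lam) * f z + of_real lam * z * deriv f z"

definition varsigma1 :: "nat \<Rightarrow> nat \<Rightarrow> real \<Rightarrow> real" where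
  "varsigma1 n p \<delta> =
     (if \<delta> \<le> 1 / (2 * real p) then - (real n * \<delta> * real p) / (2 * (1 - \<delta> * real p))
      else - (real n * (1 - \<delta> * real p)) / (2 * \<delta> * real p))"

end

theory Submission
  imports Defs
begin

text \<open>Put \<open>d = \<delta> p\<close> and \<open>g = p F / (z F')\<close>; the form of \<open>f\<close> lets \<open>g\<close> extend
  holomorphically to \<open>0\<close> with \<open>g - 1\<close> vanishing to order \<open>n\<close>, and the hypothesis says
  exactly \<open>Re (z g'/g) > varsigma1\<close>. If \<open>Re g \<le> d\<close> somewhere, take the smallest disc
  \<open>|z| \<le> r\<close> reaching the level \<open>Re g = d\<close>, say at \<open>z\<^sub>0\<close>. The Moebius map
  \<open>w = (g - 1)/(g + 1 - 2d)\<close> sends \<open>Re g \<ge> d\<close> into the closed unit disc, so \<open>|w| \<le> 1\<close> on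
  that disc with equality at \<open>z\<^sub>0\<close>, and \<open>w\<close> vanishes to order \<open>n\<close>. Jack's lemma gives
  \<open>z\<^sub>0 w'(z\<^sub>0)/w(z\<^sub>0) = m \<ge> n\<close>, i.e.
  \<open>z\<^sub>0 g'/g = m (g - 1)(g + 1 - 2d) / ((2 - 2d) g)\<close>, whose real part on \<open>Re g = d\<close> is at
  most \<open>varsigma1\<close>: a contradiction.\<close>

lemma powser_sums_has_field_derivative:
  fixes c :: "nat \<Rightarrow> complex"
  assumes sums: "\<And>z. z \<in> ball 0 R \<Longrightarrow> (\<lambda>k. c k * z ^ k) sums G z" and z: "z \<in> ball 0 R"
  shows "(G has_field_derivative (\<Sum>k. diffs c k * z ^ k)) (at z)"
proof (rule has_field_derivative_transform_within_open[OF termdiffs_strong'[where K=R]])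
  show "\<And>z. norm z < R \<Longrightarrow> summable (\<lambda>k. c k * z ^ k)"
    using sums sums_summable by fastforce
  show "\<And>u. u \<in> ball 0 R \<Longrightarrow> (\<Sum>k. c k * u ^ k) = G u"
    using sums sums_unique by metis
qed (use z in auto)

lemma powser_sums_holomorphic:
  fixes c :: "nat \<Rightarrow> complex"
  assumes "\<And>z. z \<in> ball 0 R \<Longrightarrow> (\<lambda>k. c k * z ^ k) sums G z"
  shows "G holomorphic_on ball 0 R"
  using powser_sums_has_field_derivative[OF assms]
  by (meson field_differentiable_at_within field_differentiable_def holomorphic_on_def)

lemma powser_sums_deriv:
  fixes c :: "nat \<Rightarrow> complex"
  assumes sums: "\<And>z. z \<in> ball 0 R \<Longrightarrow> (\<lambda>k. c k * z ^ k) sums G z" and z: "z \<in> ball 0 R"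
  shows "(\<lambda>k. diffs c k * z ^ k) sums deriv G z"
proof -
  have "summable (\<lambda>k. diffs c k * z ^ k)"
    by (rule termdiff_converges[where K=R]) (use sums z sums_summable in fastforce)+
  then show ?thesis
    using DERIV_imp_deriv[OF powser_sums_has_field_derivative[OF sums z]]
    by (simp add: summable_sums)
qed

lemma diffs_sums_imp_sums_index_times:
  fixes c :: "nat \<Rightarrow> complex"
  assumes "(\<lambda>k. diffs c k * z ^ k) sums D"
  shows "(\<lambda>k. of_nat k * c k * z ^ k) sums (z * D)"
proof -
  have "(\<lambda>k. of_nat (Suc k) * c (Suc k) * z ^ Suc k) sums (z * D)"
    using sums_mult2[OF assms, of z] by (simp add: diffs_def mult_ac)
  then show ?thesis
    using sums_Suc_iff[of "\<lambda>k. of_nat k * c k * z ^ k"] by simp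
qed

lemma powser_sums_factor_power:
  fixes b :: "nat \<Rightarrow> complex"
  assumes "(\<lambda>k. b k * z ^ k) sums s" and "\<And>k. k < m \<Longrightarrow> b k = 0"
  shows "(\<lambda>k. b (k + m) * z ^ k) sums (\<Sum>k. b (k + m) * z ^ k)"
    and "s = z ^ m * (\<Sum>k. b (k + m) * z ^ k)"
proof -
  have "\<exists>t. (\<lambda>k. b (k + m) * z ^ k) sums t \<and> s = z ^ m * t"
  proof (cases "z = 0")
    case True
    then have "s = b 0"
      using assms(1) powser_sums_zero[of b] sums_unique2 by blast
    then show ?thesis
      using True assms(2)[of 0] powser_sums_zero[of "\<lambda>k. b (k + m)"] by (cases m) auto
  next
    case False
    have "(\<lambda>k. b (k + m) * z ^ (k + m)) sums s"
      using sums_zero_iff_shift[of m "\<lambda>k. b k * z ^ k" s] assms by simp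
    then have "(\<lambda>k. b (k + m) * z ^ (k + m) / z ^ m) sums (s / z ^ m)"
      by (rule sums_divide)
    then show ?thesis
      using False by (intro exI[of _ "s / z ^ m"]) (simp add: power_add)
  qed
  then obtain t where "(\<lambda>k. b (k + m) * z ^ k) sums t" and "s = z ^ m * t"
    by blast
  then show "(\<lambda>k. b (k + m) * z ^ k) sums (\<Sum>k. b (k + m) * z ^ k)"
    and "s = z ^ m * (\<Sum>k. b (k + m) * z ^ k)"
    by (auto simp: sums_iff)
qed

lemma has_real_derivative_Re_of_real:
  assumes "(h has_field_derivative D) (at (of_real x))"
  shows "((\<lambda>t. Re (h (of_real t))) has_real_derivative Re D) (at x)"
proof -
  have "((\<lambda>t. h (of_real t)) has_derivative (\<lambda>t. t *\<^sub>R D)) (at x)"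
    using has_vector_derivative_real_field[OF assms] by (simp add: has_vector_derivative_def)
  from has_derivative_Re[OF this] show ?thesis
    by (simp add: has_field_derivative_def mult.commute[of _ "Re D"])
qed

lemma Schwarz_power_bound:
  fixes v w :: "complex \<Rightarrow> complex"
  assumes r: "r > 0"
    and v: "v holomorphic_on ball 0 r" "continuous_on (cball 0 r) v"
    and wv: "\<And>z. z \<in> cball 0 r \<Longrightarrow> w z = z ^ n * v z"
    and le1: "\<And>z. z \<in> cball 0 r \<Longrightarrow> norm (w z) \<le> 1"
    and u: "u \<in> cball 0 r"
  shows "norm (w u) \<le> (norm u / r) ^ n"
proof -
  have "norm (v u) \<le> 1 / r ^ n"
  proof (rule maximum_modulus_frontier[where S="cball 0 r" and f=v])
    fix y :: complex
    assume "y \<in> frontier (cball 0 r)"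
    then have "norm y = r" and "r ^ n * norm (v y) \<le> 1"
      using r wv[of y] le1[of y] by (auto simp: norm_mult norm_power)
    then show "norm (v y) \<le> 1 / r ^ n"
      using r by (simp add: field_simps)
  qed (use v u in auto)
  then have "norm u ^ n * norm (v u) \<le> norm u ^ n * (1 / r ^ n)"
    by (rule mult_left_mono) simp
  then show ?thesis
    using wv[OF u] by (simp add: norm_mult norm_power power_divide)
qed

lemma boundary_max_imp_Im_log_deriv_eq_0:
  fixes w :: "complex \<Rightarrow> complex"
  assumes W: "(w has_field_derivative W) (at z0)"
    and w0: "norm (w z0) = 1"
    and le1: "\<And>z. norm z = norm z0 \<Longrightarrow> norm (w z) \<le> 1"
  shows "Im (z0 * W / w z0) = 0"
proof -
  define c where "c = cnj (w z0)"
  have "w z0 \<noteq> 0"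
    using w0 by auto
  then have c: "c * w z0 = 1" and "c = 1 / w z0"
    using w0 complex_norm_square[of "w z0"] by (auto simp: c_def field_simps)
  have "((\<lambda>s. c * w (z0 * exp (\<i> * s))) has_field_derivative c * W * (z0 * \<i>)) (at (of_real 0))"
    using W by (auto intro!: derivative_eq_intros DERIV_chain2[where f=w])
  then have D: "((\<lambda>t. Re (c * w (z0 * exp (\<i> * of_real t)))) has_real_derivative
      Re (c * W * (z0 * \<i>))) (at 0)"
    by (rule has_real_derivative_Re_of_real)
  have "Re (c * W * (z0 * \<i>)) = 0"
  proof (rule DERIV_local_max[OF D zero_less_one], intro allI impI)
    fix t :: real
    have "norm (w (z0 * exp (\<i> * of_real t))) \<le> 1"
      by (rule le1) (simp add: norm_mult)
    then have "Re (c * w (z0 * exp (\<i> * of_real t))) \<le> 1"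
      using complex_Re_le_cmod[of "c * w (z0 * exp (\<i> * of_real t))"] w0
      by (simp add: c_def norm_mult)
    then show "Re (c * w (z0 * exp (\<i> * of_real t))) \<le> Re (c * w (z0 * exp (\<i> * of_real 0)))"
      using c by simp
  qed
  moreover have "c * W * (z0 * \<i>) = \<i> * (z0 * W / w z0)"
    using \<open>c = 1 / w z0\<close> by simp
  ultimately show ?thesis
    using Re_i_times[of "z0 * W / w z0"] by simp
qed

lemma radial_bound_imp_Re_log_deriv_ge:
  fixes w :: "complex \<Rightarrow> complex"
  assumes W: "(w has_field_derivative W) (at z0)"
    and w0: "norm (w z0) = 1"
    and le: "\<And>t. 0 \<le> t \<Longrightarrow> t \<le> 1 \<Longrightarrow> norm (w (of_real t * z0)) \<le> t ^ n"
  shows "Re (z0 * W / w z0) \<ge> real n"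
proof (rule ccontr)
  define c where "c = cnj (w z0)"
  have "w z0 \<noteq> 0"
    using w0 by auto
  then have c: "c * w z0 = 1" and "c = 1 / w z0"
    using w0 complex_norm_square[of "w z0"] by (auto simp: c_def field_simps)
  assume "\<not> ?thesis"
  then have neg: "Re (c * W * z0) - real n < 0"
    using \<open>c = 1 / w z0\<close> by (simp add: mult.commute)
  have "((\<lambda>s. c * w (s * z0)) has_field_derivative c * W * z0) (at (of_real 1))"
    using W by (auto intro!: derivative_eq_intros DERIV_chain2[where f=w])
  from DERIV_diff[OF has_real_derivative_Re_of_real[OF this] DERIV_pow[of n 1]]
  have "((\<lambda>t. Re (c * w (of_real t * z0)) - t ^ n) has_real_derivative
      Re (c * W * z0) - real n) (at 1)"
    by simp
  from DERIV_neg_dec_left[OF this neg] obtain e where e: "e > 0"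
    and dec: "\<And>h. 0 < h \<Longrightarrow> h < e \<Longrightarrow>
      Re (c * w (of_real 1 * z0)) - 1 ^ n < Re (c * w (of_real (1 - h) * z0)) - (1 - h) ^ n"
    by blast
  define h where "h = min (e / 2) (1 / 2)"
  have h: "0 < h" "h < e" "h \<le> 1 / 2"
    using e by (auto simp: h_def)
  have "Re (c * w (of_real (1 - h) * z0)) \<le> norm (w (of_real (1 - h) * z0))"
    using complex_Re_le_cmod[of "c * w (of_real (1 - h) * z0)"] w0 by (simp add: c_def norm_mult)
  also have "\<dots> \<le> (1 - h) ^ n"
    using le[of "1 - h"] h by simp
  finally show False
    using dec[OF h(1,2)] c by simp
qed

lemma Jack_lemma:
  fixes v w :: "complex \<Rightarrow> complex"
  assumes W: "(w has_field_derivative W) (at z0)"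
    and r: "r > 0" and z0: "norm z0 = r" and w0: "norm (w z0) = 1"
    and v: "v holomorphic_on ball 0 r" "continuous_on (cball 0 r) v"
    and wv: "\<And>z. z \<in> cball 0 r \<Longrightarrow> w z = z ^ n * v z"
    and le1: "\<And>z. z \<in> cball 0 r \<Longrightarrow> norm (w z) \<le> 1"
  obtains m where "m \<ge> real n" and "z0 * W / w z0 = of_real m"
proof
  show "Re (z0 * W / w z0) \<ge> real n"
  proof (rule radial_bound_imp_Re_log_deriv_ge[OF W w0])
    fix t :: real
    assume t: "0 \<le> t" "t \<le> 1"
    then have "of_real t * z0 \<in> cball 0 r"
      using z0 r by (simp add: norm_mult mult_left_le_one_le)
    from Schwarz_power_bound[OF r v wv le1 this]
    show "norm (w (of_real t * z0)) \<le> t ^ n"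
      using t z0 r by (simp add: norm_mult)
  qed
  have "Im (z0 * W / w z0) = 0"
    by (rule boundary_max_imp_Im_log_deriv_eq_0[OF W w0]) (use le1 z0 in auto)
  then show "z0 * W / w z0 = of_real (Re (z0 * W / w z0))"
    by (simp add: complex_eq_iff)
qed

lemma obtain_minimal_radius_of_level:
  fixes f :: "'a::euclidean_space \<Rightarrow> real"
  assumes f: "continuous_on (ball 0 R) f" and f0: "d < f 0"
    and z: "z \<in> ball 0 R" "f z \<le> d"
  obtains r z0 where "0 < r" "r \<le> norm z" "norm z0 = r" "f z0 = d"
    and "\<And>u. u \<in> cball 0 r \<Longrightarrow> d \<le> f u"
proof -
  define S where "S = {u \<in> cball 0 (norm z). f u \<le> d}"
  have "cball 0 (norm z) \<subseteq> ball 0 R"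
    using z by auto
  then have "closed S"
    unfolding S_def using f by (intro continuous_on_closed_Collect_le) (auto intro: continuous_on_subset)
  moreover have "S \<subseteq> cball 0 (norm z)"
    by (auto simp: S_def)
  ultimately have "compact S"
    by (meson bounded_cball bounded_subset compact_eq_bounded_closed)
  moreover have "z \<in> S"
    using z by (simp add: S_def)
  ultimately obtain z0 where z0: "z0 \<in> S" and min: "\<And>u. u \<in> S \<Longrightarrow> norm z0 \<le> norm u"
    using compact_attains_inf[of "norm ` S"] compact_continuous_image[OF continuous_on_norm_id]
    by (metis (no_types, lifting) empty_iff image_iff image_is_empty)
  define r where "r = norm z0"
  have "z0 \<noteq> 0"
    using z0 f0 by (auto simp: S_def)
  then have r: "0 < r" "r \<le> norm z"
    using z0 by (auto simp: r_def S_def)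
  then have sub: "cball 0 r \<subseteq> ball 0 R"
    using z by auto
  have "d \<le> f u" if "u \<in> ball 0 r" for u
  proof (rule ccontr)
    assume "\<not> d \<le> f u"
    then have "u \<in> S"
      using that r by (simp add: S_def)
    then show False
      using min that by (fastforce simp: r_def)
  qed
  then have ge: "d \<le> f u" if "u \<in> cball 0 r" for u
    using continuous_ge_on_closure[of "ball 0 r" f u d] continuous_on_subset[OF f sub] that r
    by auto
  show ?thesis
  proof
    show "f z0 = d"
      using ge[of z0] z0 by (simp add: S_def r_def)
  qed (use r ge in \<open>auto simp: r_def\<close>)
qed

lemma norm_diff_one_le_iff_Re_ge:
  fixes x :: complex and d :: real
  assumes "d < 1"
  shows "norm (x - 1) \<le> norm (x + 1 - 2 * of_real d) \<longleftrightarrow> d \<le> Re x"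
proof -
  have "(norm (x + 1 - 2 * of_real d))\<^sup>2 - (norm (x - 1))\<^sup>2 = 4 * (Re x - d) * (1 - d)"
    unfolding cmod_power2 by (simp add: power2_eq_square algebra_simps)
  moreover have "norm (x - 1) \<le> norm (x + 1 - 2 * of_real d) \<longleftrightarrow>
      0 \<le> (norm (x + 1 - 2 * of_real d))\<^sup>2 - (norm (x - 1))\<^sup>2"
    using abs_le_square_iff[of "norm (x - 1)"] by simp
  ultimately show ?thesis
    using assms by (simp add: zero_le_mult_iff)
qed

lemma norm_diff_one_eq_iff_Re_eq:
  fixes x :: complex and d :: real
  assumes "d \<noteq> 1"
  shows "norm (x - 1) = norm (x + 1 - 2 * of_real d) \<longleftrightarrow> Re x = d"
proof -
  have "(norm (x + 1 - 2 * of_real d))\<^sup>2 - (norm (x - 1))\<^sup>2 = 4 * (Re x - d) * (1 - d)"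
    unfolding cmod_power2 by (simp add: power2_eq_square algebra_simps)
  moreover have "norm (x - 1) = norm (x + 1 - 2 * of_real d) \<longleftrightarrow>
      (norm (x - 1))\<^sup>2 = (norm (x + 1 - 2 * of_real d))\<^sup>2"
    using power2_eq_iff_nonneg by (metis norm_ge_zero)
  ultimately show ?thesis
    using assms by auto
qed

lemma halfplane_to_disc_denom_nonzero:
  fixes x :: complex and d :: real
  assumes "d < 1" and "d \<le> Re x"
  shows "x + 1 - 2 * of_real d \<noteq> 0"
proof
  assume "x + 1 - 2 * of_real d = 0"
  then have "Re (x + 1 - 2 * of_real d) = 0"
    by simp
  then show False
    using assms by simp
qed

lemma has_field_derivative_halfplane_to_disc:
  fixes g :: "complex \<Rightarrow> complex" and d :: real
  assumes "(g has_field_derivative G') (at z)" and "g z + 1 - 2 * of_real d \<noteq> 0"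
  shows "((\<lambda>u. (g u - 1) / (g u + 1 - 2 * of_real d)) has_field_derivative
      (2 - 2 * of_real d) * G' / (g z + 1 - 2 * of_real d)\<^sup>2) (at z)"
  using assms
  by (auto intro!: derivative_eq_intros simp: power2_eq_square field_simps)

lemma varsigma1_eq_varsigma1_1:
  assumes "p > 0"
  shows "varsigma1 n p \<delta> = varsigma1 n 1 (\<delta> * real p)"
proof -
  have "\<delta> \<le> 1 / (2 * real p) \<longleftrightarrow> \<delta> * real p \<le> 1 / 2"
    using assms by (simp add: field_simps)
  then show ?thesis
    by (simp add: varsigma1_def mult.assoc)
qed

text \<open>The expression below is the value of \<open>z\<^sub>0 g'(z\<^sub>0) / g(z\<^sub>0)\<close> delivered by
  \<open>Jack_lemma_at_level\<close> at a point with \<open>Re g(z\<^sub>0) = d\<close>.\<close>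

lemma Re_Jack_expression_eq:
  fixes d y m :: real
  defines "g0 \<equiv> Complex d y"
  assumes "g0 \<noteq> 0" and "d \<noteq> 1"
  shows "Re (of_real m * (g0 - 1) * (g0 + 1 - 2 * of_real d) / ((2 - 2 * of_real d) * g0))
    = - (m * d * (((1 - d)\<^sup>2 + y\<^sup>2) / (d\<^sup>2 + y\<^sup>2))) / (2 * (1 - d))"
proof -
  define s where "s = d\<^sup>2 + y\<^sup>2"
  define q where "q = ((1 - d)\<^sup>2 + y\<^sup>2) / s"
  have s: "s > 0"
    using assms unfolding s_def by (auto simp: sum_power2_gt_zero_iff complex_eq_iff)
  have "of_real m * (g0 - 1) * (g0 + 1 - 2 * of_real d) = of_real (- m * ((1 - d)\<^sup>2 + y\<^sup>2))"
    unfolding g0_def by (simp add: complex_eq_iff power2_eq_square algebra_simps)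
  also have "(1 - d)\<^sup>2 + y\<^sup>2 = q * s"
    using s by (simp add: q_def)
  finally have "of_real m * (g0 - 1) * (g0 + 1 - 2 * of_real d) = of_real (- m * q * s)"
    by (simp add: mult.assoc)
  moreover have "(2 - 2 * of_real d) * g0 = of_real (2 * (1 - d)) * g0"
    by simp
  moreover have "Re (of_real (- m * q * s) / (of_real (2 * (1 - d)) * g0))
      = - (m * q * s) * (2 * (1 - d) * d) / ((2 * (1 - d))\<^sup>2 * s)"
    unfolding g0_def s_def by (simp add: Re_divide power2_eq_square algebra_simps)
  ultimately show ?thesis
    using s assms by (simp add: power2_eq_square q_def s_def mult_ac)
qed

lemma Re_Jack_expression_le_varsigma1:
  fixes g0 :: complex and d m :: real
  assumes g0: "Re g0 = d" "g0 \<noteq> 0" and d: "0 \<le> d" "d < 1" and m: "m \<ge> real n"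
  shows "Re (of_real m * (g0 - 1) * (g0 + 1 - 2 * of_real d) / ((2 - 2 * of_real d) * g0))
    \<le> varsigma1 n 1 d"
proof -
  define y where "y = Im g0"
  define s where "s = d\<^sup>2 + y\<^sup>2"
  define q where "q = ((1 - d)\<^sup>2 + y\<^sup>2) / s"
  have g0_eq: "g0 = Complex d y"
    using g0 by (simp add: y_def complex_eq_iff)
  have s: "s > 0"
    using g0 unfolding g0_eq s_def by (auto simp: sum_power2_gt_zero_iff complex_eq_iff)
  have R: "Re (of_real m * (g0 - 1) * (g0 + 1 - 2 * of_real d) / ((2 - 2 * of_real d) * g0))
      = - (m * d * q) / (2 * (1 - d))"
    using Re_Jack_expression_eq[of d y m] g0 d unfolding g0_eq q_def s_def by simp
  show ?thesis
  proof (cases "d \<le> 1 / 2")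
    case True
    then have "q \<ge> 1"
      using s d by (simp add: q_def s_def power2_eq_square field_simps)
    have "real n * d \<le> m * d"
      using m d by (simp add: mult_right_mono)
    also have "\<dots> \<le> m * d * q"
      using \<open>q \<ge> 1\<close> m d mult_left_mono[of 1 q "m * d"] by simp
    finally show ?thesis
      using True d unfolding R by (simp add: varsigma1_def divide_right_mono)
  next
    case False
    have "q * d\<^sup>2 - (1 - d)\<^sup>2 = y\<^sup>2 * (2 * d - 1) / s"
      using s by (simp add: q_def field_simps) (simp add: s_def power2_eq_square algebra_simps)
    also have "\<dots> \<ge> 0"
      using False s by simp
    finally have "q * d\<^sup>2 \<ge> (1 - d)\<^sup>2"
      by simp
    then have "real n * (1 - d)\<^sup>2 \<le> m * (q * d\<^sup>2)"
      using m by (intro mult_mono) auto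
    then have "real n * (1 - d)\<^sup>2 / d \<le> m * d * q"
      using False by (simp add: pos_divide_le_eq power2_eq_square mult_ac)
    then have "real n * (1 - d)\<^sup>2 / d / (2 * (1 - d)) \<le> m * d * q / (2 * (1 - d))"
      by (rule divide_right_mono) (use d in simp)
    moreover have "real n * (1 - d)\<^sup>2 / d / (2 * (1 - d)) = real n * (1 - d) / (2 * d)"
      using d False by (simp add: power2_eq_square divide_simps)
    ultimately show ?thesis
      using False unfolding R by (simp add: varsigma1_def)
  qed
qed

lemma Jack_lemma_at_level:
  fixes g h :: "complex \<Rightarrow> complex" and d :: real
  assumes S: "open S" "cball 0 r \<subseteq> S" and r: "r > 0"
    and g: "g holomorphic_on S" and h: "h holomorphic_on S"
    and gh: "\<And>z. z \<in> S \<Longrightarrow> g z - 1 = z ^ n * h z"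
    and d: "d < 1" and ge: "\<And>u. u \<in> cball 0 r \<Longrightarrow> d \<le> Re (g u)"
    and z0: "norm z0 = r" "Re (g z0) = d"
  obtains m where "m \<ge> real n"
    and "(2 - 2 * of_real d) * (z0 * deriv g z0) = of_real m * (g z0 - 1) * (g z0 + 1 - 2 * of_real d)"
proof -
  define D where "D u = g u + 1 - 2 * of_real d" for u
  have D_nz: "D u \<noteq> 0" if "u \<in> cball 0 r" for u
    using halfplane_to_disc_denom_nonzero[OF d ge[OF that]] by (simp add: D_def)
  define w where "w u = (g u - 1) / D u" for u
  define v where "v u = h u / D u" for u
  define G' where "G' = deriv g z0"
  have "(g has_field_derivative G') (at z0)"
    unfolding G'_def using holomorphic_derivI[OF g S(1)] S(2) z0 by auto
  then have W: "(w has_field_derivative (2 - 2 * of_real d) * G' / (D z0)\<^sup>2) (at z0)"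
    unfolding w_def[abs_def] D_def using has_field_derivative_halfplane_to_disc D_nz[of z0] z0 D_def
    by auto
  have w0: "norm (w z0) = 1"
    using norm_diff_one_eq_iff_Re_eq[of d "g z0"] z0 d D_nz[of z0] by (simp add: w_def D_def norm_divide)
  have le1: "norm (w u) \<le> 1" if "u \<in> cball 0 r" for u
    using norm_diff_one_le_iff_Re_ge[of d "g u"] ge[OF that] d D_nz[OF that]
    by (simp add: w_def D_def norm_divide divide_le_eq_1)
  have v: "v holomorphic_on cball 0 r"
    unfolding v_def[abs_def] D_def using D_nz S(2)
    by (auto simp: D_def intro!: holomorphic_intros holomorphic_on_subset[OF g] holomorphic_on_subset[OF h])
  have wv: "w u = u ^ n * v u" if "u \<in> cball 0 r" for u
    using gh[of u] that S(2) by (auto simp: w_def v_def)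
  obtain m where m: "m \<ge> real n"
    and Jack: "z0 * ((2 - 2 * of_real d) * G' / (D z0)\<^sup>2) / w z0 = of_real m"
    using Jack_lemma[OF W r z0(1) w0 holomorphic_on_subset[OF v ball_subset_cball]
        holomorphic_on_imp_continuous_on[OF v] wv le1] by blast
  have "g z0 \<noteq> 1" "D z0 \<noteq> 0"
    using w0 D_nz[of z0] z0 by (auto simp: w_def)
  have "z0 * ((2 - 2 * of_real d) * G' / (D z0)\<^sup>2) / w z0
      = (2 - 2 * of_real d) * (z0 * G') / ((g z0 - 1) * D z0)"
    by (simp add: w_def power2_eq_square mult_ac)
  with Jack have "(2 - 2 * of_real d) * (z0 * G') / ((g z0 - 1) * D z0) = of_real m"
    by simp
  with \<open>g z0 \<noteq> 1\<close> \<open>D z0 \<noteq> 0\<close>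
  have "(2 - 2 * of_real d) * (z0 * G') = of_real m * (g z0 - 1) * D z0"
    by (simp add: divide_eq_eq mult_ac)
  with m show ?thesis
    using that by (simp add: G'_def D_def)
qed

lemma Re_gt_if_Re_log_deriv_gt_varsigma1:
  fixes g h :: "complex \<Rightarrow> complex" and d :: real
  assumes n: "n \<ge> 1"
    and g: "g holomorphic_on ball 0 1" and h: "h holomorphic_on ball 0 1"
    and gh: "\<And>z. z \<in> ball 0 1 \<Longrightarrow> g z - 1 = z ^ n * h z"
    and g_nz: "\<And>z. z \<in> ball 0 1 - {0} \<Longrightarrow> g z \<noteq> 0"
    and d: "0 \<le> d" "d < 1"
    and hyp: "\<And>z. z \<in> ball 0 1 - {0} \<Longrightarrow> Re (z * deriv g z / g z) > varsigma1 n 1 d"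
    and z: "z \<in> ball 0 1"
  shows "Re (g z) > d"
proof (rule ccontr)
  have "g 0 = 1"
    using gh[of 0] n by (simp add: power_0_left)
  assume "\<not> Re (g z) > d"
  moreover have "Re (g 0) > d"
    using \<open>g 0 = 1\<close> d by simp
  moreover have "continuous_on (ball 0 1) (\<lambda>u. Re (g u))"
    using g by (intro continuous_intros holomorphic_on_imp_continuous_on)
  ultimately obtain r z0 where r: "0 < r" "r \<le> norm z" and z0: "norm z0 = r" "Re (g z0) = d"
    and ge: "\<And>u. u \<in> cball 0 r \<Longrightarrow> d \<le> Re (g u)"
    using obtain_minimal_radius_of_level[of 1 "\<lambda>u. Re (g u)" d z] z by auto
  have "cball 0 r \<subseteq> ball 0 1"
    using r z by auto
  then obtain m where m: "m \<ge> real n"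
    and eq: "(2 - 2 * of_real d) * (z0 * deriv g z0) = of_real m * (g z0 - 1) * (g z0 + 1 - 2 * of_real d)"
    using Jack_lemma_at_level[OF open_ball _ r(1) g h gh d(2) ge z0] by blast
  have z0_in: "z0 \<in> ball 0 1 - {0}"
    using z0 r z by auto
  have "(2 - 2 * of_real d :: complex) \<noteq> 0"
    using d by (simp add: complex_eq_iff)
  then have "z0 * deriv g z0 / g z0 = (2 - 2 * of_real d) * (z0 * deriv g z0) / ((2 - 2 * of_real d) * g z0)"
    by simp
  also have "\<dots> = of_real m * (g z0 - 1) * (g z0 + 1 - 2 * of_real d) / ((2 - 2 * of_real d) * g z0)"
    unfolding eq ..
  finally have "z0 * deriv g z0 / g z0
      = of_real m * (g z0 - 1) * (g z0 + 1 - 2 * of_real d) / ((2 - 2 * of_real d) * g z0)" .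
  then have "Re (z0 * deriv g z0 / g z0) \<le> varsigma1 n 1 d"
    using Re_Jack_expression_le_varsigma1[OF z0(2) g_nz[OF z0_in] d m] by simp
  then show False
    using hyp[OF z0_in] by simp
qed

lemma powser_sums_factor_holomorphic:
  fixes b :: "nat \<Rightarrow> complex"
  assumes "\<And>z. z \<in> ball 0 R \<Longrightarrow> (\<lambda>k. b k * z ^ k) sums s z" and "\<And>k. k < m \<Longrightarrow> b k = 0"
  obtains t where "t holomorphic_on ball 0 R" and "\<And>z. z \<in> ball 0 R \<Longrightarrow> s z = z ^ m * t z"
    and "t 0 = b m"
proof
  define t where "t z = (\<Sum>k. b (k + m) * z ^ k)" for z
  have "(\<lambda>k. b (k + m) * z ^ k) sums t z" if "z \<in> ball 0 R" for z
    unfolding t_def using powser_sums_factor_power(1)[OF assms(1)[OF that] assms(2)] .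
  then show "t holomorphic_on ball 0 R"
    by (rule powser_sums_holomorphic)
  show "s z = z ^ m * t z" if "z \<in> ball 0 R" for z
    unfolding t_def using powser_sums_factor_power(2)[OF assms(1)[OF that] assms(2)] .
  show "t 0 = b m"
    by (simp add: t_def powser_zero)
qed

lemma powser_quotient_holomorphic_extension:
  fixes c :: "nat \<Rightarrow> complex" and F :: "complex \<Rightarrow> complex"
  assumes F: "\<And>z. z \<in> ball 0 1 \<Longrightarrow> (\<lambda>k. c k * z ^ k) sums F z"
    and p: "p \<ge> 1" and cp: "c p \<noteq> 0" and c0: "\<And>k. k < p + n \<Longrightarrow> k \<noteq> p \<Longrightarrow> c k = 0"
    and F'_nz: "\<And>z. z \<in> ball 0 1 - {0} \<Longrightarrow> deriv F z \<noteq> 0"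
  obtains g h where "g holomorphic_on ball 0 1" and "h holomorphic_on ball 0 1"
    and "\<And>z. z \<in> ball 0 1 \<Longrightarrow> g z - 1 = z ^ n * h z"
    and "\<And>z. z \<in> ball 0 1 - {0} \<Longrightarrow> g z = of_nat p * F z / (z * deriv F z)"
proof -
  have c_below: "c k = 0" if "k < p" for k
    using c0 that by simp
  obtain H where H: "H holomorphic_on ball 0 1" "\<And>z. z \<in> ball 0 1 \<Longrightarrow> F z = z ^ p * H z"
    "H 0 = c p"
    using powser_sums_factor_holomorphic[OF F c_below] by blast
  \<comment> \<open>\<open>z F' - p F\<close> has coefficients \<open>(k - p) c\<^sub>k\<close>, which vanish below \<open>p + n\<close>\<close>
  have "(\<lambda>k. (of_nat k - of_nat p) * c k * z ^ k) sums (z * deriv F z - of_nat p * F z)"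
    if "z \<in> ball 0 1" for z
    using sums_diff[OF diffs_sums_imp_sums_index_times[OF powser_sums_deriv[OF F that]]
        sums_mult[OF F[OF that], of "of_nat p"]]
    by (simp add: algebra_simps)
  moreover have "(of_nat k - of_nat p) * c k = 0" if "k < p + n" for k
    using c0[OF that] by (cases "k = p") auto
  ultimately obtain E where E: "E holomorphic_on ball 0 1"
    "\<And>z. z \<in> ball 0 1 \<Longrightarrow> z * deriv F z - of_nat p * F z = z ^ (p + n) * E z"
    "E 0 = of_nat n * c (p + n)"
    by (rule powser_sums_factor_holomorphic) auto
  define K where "K z = of_nat p * H z + z ^ n * E z" for z
  have zF': "z * deriv F z = z ^ p * K z" if "z \<in> ball 0 1" for z
    using E(2)[OF that] H(2)[OF that] by (simp add: K_def algebra_simps power_add)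
  have K_nz: "K z \<noteq> 0" if "z \<in> ball 0 1" for z
  proof (cases "z = 0")
    case True
    then show ?thesis
      using p cp H(3) E(3) by (cases n) (auto simp: K_def)
  next
    case False
    then show ?thesis
      using zF'[OF that] F'_nz that by auto
  qed
  show ?thesis
  proof
    show "(\<lambda>z. of_nat p * H z / K z) holomorphic_on ball 0 1"
      "(\<lambda>z. - E z / K z) holomorphic_on ball 0 1"
      unfolding K_def using H(1) E(1) K_nz by (auto simp: K_def intro!: holomorphic_intros)
    show "of_nat p * H z / K z - 1 = z ^ n * (- E z / K z)" if "z \<in> ball 0 1" for z
      using K_nz[OF that] by (simp add: K_def field_simps)
    show "of_nat p * H z / K z = of_nat p * F z / (z * deriv F z)" if "z \<in> ball 0 1 - {0}" for z
      using H(2)[of z] zF'[of z] that by simp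
  qed
qed

lemma log_deriv_of_quotient:
  fixes F g :: "complex \<Rightarrow> complex"
  assumes S: "open S" "z \<in> S" and F: "F holomorphic_on S"
    and g: "\<And>u. u \<in> S \<Longrightarrow> g u = a * F u / (u * deriv F u)"
    and nz: "a \<noteq> 0" "z \<noteq> 0" "F z \<noteq> 0" "deriv F z \<noteq> 0"
  shows "z * deriv g z / g z = z * deriv F z / F z - 1 - z * deriv (deriv F) z / deriv F z"
proof -
  define F1 F2 where "F1 = deriv F z" and "F2 = deriv (deriv F) z"
  have "(F has_field_derivative F1) (at z)"
    unfolding F1_def using holomorphic_derivI[OF F S] .
  moreover have "(deriv F has_field_derivative F2) (at z)"
    unfolding F2_def using holomorphic_derivI[OF holomorphic_deriv[OF F S(1)] S] .
  ultimately have "((\<lambda>u. a * F u / (u * deriv F u)) has_field_derivative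
      a * (F1 * (z * F1) - F z * (F1 + z * F2)) / (z * F1)\<^sup>2) (at z)"
    using nz by (auto intro!: derivative_eq_intros simp: F1_def power2_eq_square algebra_simps)
  then have "(g has_field_derivative a * (F1 * (z * F1) - F z * (F1 + z * F2)) / (z * F1)\<^sup>2) (at z)"
    by (rule has_field_derivative_transform_within_open[OF _ S]) (use g in auto)
  then have dg: "deriv g z = a * (F1 * (z * F1) - F z * (F1 + z * F2)) / (z * F1)\<^sup>2"
    by (rule DERIV_imp_deriv)
  have gz: "g z = a * F z / (z * F1)"
    unfolding F1_def by (rule g[OF S(2)])
  show ?thesis
    using nz unfolding dg gz F1_def[symmetric] F2_def[symmetric]
    by (simp add: field_simps power2_eq_square)
qed

lemma F_lam_sums:
  fixes a :: "nat \<Rightarrow> complex"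
  assumes f: "\<And>z. z \<in> ball 0 1 \<Longrightarrow> (\<lambda>k. a k * z ^ k) sums f z" and z: "z \<in> ball 0 1"
  shows "(\<lambda>k. (1 - of_real lam + of_real lam * of_nat k) * a k * z ^ k) sums F_lam lam f z"
proof -
  have "(\<lambda>k. of_nat k * a k * z ^ k) sums (z * deriv f z)"
    using diffs_sums_imp_sums_index_times[OF powser_sums_deriv[OF f z]] .
  from sums_add[OF sums_mult[OF f[OF z], of "1 - of_real lam"] sums_mult[OF this, of "of_real lam"]]
  show ?thesis
    by (simp add: F_lam_def algebra_simps)
qed

lemma F_lam_powser:
  assumes "of_form p n f" and "0 \<le> lam" and "p \<ge> 1"
  obtains c where "\<And>z. z \<in> ball 0 1 \<Longrightarrow> (\<lambda>k. c k * z ^ k) sums F_lam lam f z"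
    and "c p \<noteq> 0" and "\<And>k. k < p + n \<Longrightarrow> k \<noteq> p \<Longrightarrow> c k = 0"
proof -
  obtain a where "a p = 1" and a0: "\<And>k. k < p + n \<Longrightarrow> k \<noteq> p \<Longrightarrow> a k = 0"
    and f: "\<And>z. z \<in> ball 0 1 \<Longrightarrow> (\<lambda>k. a k * z ^ k) sums f z"
    using assms(1) unfolding of_form_def unit_disc_def by blast
  have "1 - lam + lam * real p \<ge> 1"
    using assms(2,3) mult_left_mono[of 1 "real p" lam] by simp
  with \<open>a p = 1\<close> show ?thesis
    using that[of "\<lambda>k. (1 - of_real lam + of_real lam * of_nat k) * a k"] F_lam_sums[OF f] a0
    by (simp add: complex_eq_iff mult.assoc)
qed

lemma Re_quotient_gt_if_Re_log_deriv_gt_varsigma1: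
  fixes c :: "nat \<Rightarrow> complex" and F :: "complex \<Rightarrow> complex"
  assumes n: "n \<ge> 1" and p: "p \<ge> 1"
    and F: "\<And>z. z \<in> ball 0 1 \<Longrightarrow> (\<lambda>k. c k * z ^ k) sums F z"
    and cp: "c p \<noteq> 0" and c0: "\<And>k. k < p + n \<Longrightarrow> k \<noteq> p \<Longrightarrow> c k = 0"
    and FF'_nz: "\<And>z. z \<in> ball 0 1 - {0} \<Longrightarrow> F z \<noteq> 0 \<and> deriv F z \<noteq> 0"
    and \<delta>: "0 \<le> \<delta>" "\<delta> < 1 / real p"
    and hyp: "\<And>z. z \<in> ball 0 1 - {0} \<Longrightarrow>
      Re (z * deriv F z / F z - 1 - z * deriv (deriv F) z / deriv F z) > varsigma1 n p \<delta>"
    and z: "z \<in> ball 0 1 - {0}"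
  shows "Re (F z / (z * deriv F z)) > \<delta>"
proof -
  obtain g h where g: "g holomorphic_on ball 0 1" and h: "h holomorphic_on ball 0 1"
    and gh: "\<And>z. z \<in> ball 0 1 \<Longrightarrow> g z - 1 = z ^ n * h z"
    and g_eq: "\<And>z. z \<in> ball 0 1 - {0} \<Longrightarrow> g z = of_nat p * F z / (z * deriv F z)"
    using powser_quotient_holomorphic_extension[OF F p cp c0] FF'_nz by blast
  have p_pos: "real p > 0"
    using p by simp
  have "Re (g z) > \<delta> * real p"
  proof (rule Re_gt_if_Re_log_deriv_gt_varsigma1[OF n g h gh])
    show "g u \<noteq> 0" if "u \<in> ball 0 1 - {0}" for u
      using g_eq[OF that] FF'_nz[OF that] that p_pos by simp
    show "0 \<le> \<delta> * real p" "\<delta> * real p < 1"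
      using \<delta> p_pos by (auto simp: field_simps)
    have "F holomorphic_on ball 0 1 - {0}"
      using powser_sums_holomorphic[OF F] by (rule holomorphic_on_subset) auto
    then show "Re (u * deriv g u / g u) > varsigma1 n 1 (\<delta> * real p)" if "u \<in> ball 0 1 - {0}" for u
      using log_deriv_of_quotient[OF open_delete[OF open_ball] that _ g_eq] hyp[OF that] FF'_nz[OF that] that p_pos
        varsigma1_eq_varsigma1_1[of p n \<delta>] p
      by auto
  qed (use z in auto)
  moreover have "Re (g z) = real p * Re (F z / (z * deriv F z))"
    unfolding g_eq[OF z] times_divide_eq_right[symmetric] by (simp del: times_divide_eq_right)
  ultimately show ?thesis
    using p_pos by (simp add: mult.commute)
qed

theorem corollary3p14:
  fixes n p :: nat and lam \<delta> :: real and f :: "complex \<Rightarrow> complex"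
  assumes "n \<ge> 1" and "p \<ge> 1"
    and "0 \<le> lam" and "lam \<le> 1"
    and "of_form p n f"
    and "\<forall>z\<in>unit_disc - {0}. F_lam lam f z * deriv (F_lam lam f) z \<noteq> 0"
    and "0 \<le> \<delta>" and "\<delta> < 1 / real p"
    and "\<forall>z\<in>unit_disc - {0}.
           Re (z * deriv (F_lam lam f) z / F_lam lam f z - 1
               - z * deriv (deriv (F_lam lam f)) z / deriv (F_lam lam f) z) > varsigma1 n p \<delta>"
  shows "\<forall>z\<in>unit_disc - {0}. Re (F_lam lam f z / (z * deriv (F_lam lam f) z)) > \<delta>"
proof
  fix z
  assume z: "z \<in> unit_disc - {0}"
  obtain c where c: "\<And>z. z \<in> ball 0 1 \<Longrightarrow> (\<lambda>k. c k * z ^ k) sums F_lam lam f z"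
    "c p \<noteq> 0" "\<And>k. k < p + n \<Longrightarrow> k \<noteq> p \<Longrightarrow> c k = 0"
    using F_lam_powser[OF assms(5,3,2)] by blast
  show "Re (F_lam lam f z / (z * deriv (F_lam lam f) z)) > \<delta>"
    by (rule Re_quotient_gt_if_Re_log_deriv_gt_varsigma1[OF assms(1,2) c])
      (use assms(6-9) z in \<open>auto simp: unit_disc_def\<close>)
qed

end
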